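(* Let $b,c_1,c_2$ be positive integers and let $\alpha/\beta$ be the right lobster $\mathcal{L}^{c_1,c_2}_b$, with $c_1$, $b$, $c_2$ cells in the top, middle and bottom rows respectively. Then the length of the longest chain in the poset $\mathrm{SET}(\alpha/\beta)$ is $$\mathrm{rank}(\mathrm{SET}(\alpha/\beta))=\begin{cases}c_2(b+c_1)-\binom{c_1+1}{2} & \text{if } c_1\le c_2,\\ bc_1+\binom{c_2}{2} & \text{if } c_1>c_2.\end{cases}$$
   Context: Rows are numbered from the bottom. The right lobster $\mathcal{L}^{c_1,c_2}_b$ is the skew diagram $\alpha/\beta$ with $\alpha=(b+1+c_2,b+1,b+1+c_1)$, $\beta=(b+1,1,b+1)$: a bottom row of $c_2$ cells in columns $b+2,\ldots,b+1+c_2$, a middle row of $b$ cells in columns $2,\ldots,b+1$, and a top row of $c_1$ cells in columns $b+2,\ldots,b+1+c_1$. $\mathrm{SET}(\alpha/\beta)$ is the set of bijective fillings with $1,\ldots,N$ ($N=b+c_1+c_2$) whose rows increase left to right and columns increase bottom to top. For $1\le i\le N-1$, $\pi_i(T)=T$ if $i+1$ is in a strictly higher row than $i$, $\pi_i(T)=s_i(T)$ (swap $i$ and $i+1$) if $i+1$ is in a strictly lower row than $i$, and $\pi_i(T)=0$ otherwise; the poset order is $T\le T'$ iff $T'$ is obtained from $T$ by a sequence of operators $\pi_i$ (all intermediate results nonzero). The length of a chain $x_0<x_1<\cdots<x_r$ is $r$. *)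

theory Defs
  imports Main
begin

text \<open>Cells are pairs (row, column); rows numbered 1 (bottom), 2 (middle), 3 (top).\<close>

definition lobster_cells :: "nat \<Rightarrow> nat \<Rightarrow> nat \<Rightarrow> (nat \<times> nat) set" where
  "lobster_cells b c1 c2 =
     {(1, j) | j. b + 2 \<le> j \<and> j \<le> b + 1 + c2} \<union>
     {(2, j) | j. 2 \<le> j \<and> j \<le> b + 1} \<union>
     {(3, j) | j. b + 2 \<le> j \<and> j \<le> b + 1 + c1}"

definition SET :: "(nat \<times> nat) set \<Rightarrow> ((nat \<times> nat) \<Rightarrow> nat) set" where
  "SET D = {T. bij_betw T D {1..card D} \<and> (\<forall>x. x \<notin> D \<longrightarrow> T x = 0)
      \<and> (\<forall>r j j'. (r, j) \<in> D \<longrightarrow> (r, j') \<in> D \<longrightarrow> j < j' \<longrightarrow> T (r, j) < T (r, j'))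
      \<and> (\<forall>r r' j. (r, j) \<in> D \<longrightarrow> (r', j) \<in> D \<longrightarrow> r < r' \<longrightarrow> T (r, j) < T (r', j))}"

definition swap_entries :: "nat \<Rightarrow> ((nat \<times> nat) \<Rightarrow> nat) \<Rightarrow> ((nat \<times> nat) \<Rightarrow> nat)" where
  "swap_entries i T = (\<lambda>x. if T x = i then i + 1 else if T x = i + 1 then i else T x)"

definition higher :: "(nat \<times> nat) set \<Rightarrow> ((nat \<times> nat) \<Rightarrow> nat) \<Rightarrow> nat \<Rightarrow> bool" where
  "higher D T i = (\<exists>x\<in>D. \<exists>y\<in>D. T x = i \<and> T y = i + 1 \<and> fst x < fst y)"

definition lower :: "(nat \<times> nat) set \<Rightarrow> ((nat \<times> nat) \<Rightarrow> nat) \<Rightarrow> nat \<Rightarrow> bool" where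
  "lower D T i = (\<exists>x\<in>D. \<exists>y\<in>D. T x = i \<and> T y = i + 1 \<and> fst y < fst x)"

text \<open>One application of a bubble-sorting operator pi_i with nonzero result.\<close>

definition pi_step :: "(nat \<times> nat) set \<Rightarrow> ((nat \<times> nat) \<Rightarrow> nat) \<Rightarrow> ((nat \<times> nat) \<Rightarrow> nat) \<Rightarrow> bool" where
  "pi_step D T T' = (T \<in> SET D \<and> (\<exists>i. 1 \<le> i \<and> i + 1 \<le> card D \<and>
      ((higher D T i \<and> T' = T) \<or> (lower D T i \<and> T' = swap_entries i T))))"

definition set_le :: "(nat \<times> nat) set \<Rightarrow> ((nat \<times> nat) \<Rightarrow> nat) \<Rightarrow> ((nat \<times> nat) \<Rightarrow> nat) \<Rightarrow> bool" where
  "set_le D T T' = (T \<in> SET D \<and> T' \<in> SET D \<and> (pi_step D)\<^sup>*\<^sup>* T T')"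

definition set_less :: "(nat \<times> nat) set \<Rightarrow> ((nat \<times> nat) \<Rightarrow> nat) \<Rightarrow> ((nat \<times> nat) \<Rightarrow> nat) \<Rightarrow> bool" where
  "set_less D T T' = (set_le D T T' \<and> T \<noteq> T')"

text \<open>A chain x_0 < x_1 < ... < x_r, given as a nonempty list; its length is r.\<close>

definition is_chain :: "(nat \<times> nat) set \<Rightarrow> ((nat \<times> nat) \<Rightarrow> nat) list \<Rightarrow> bool" where
  "is_chain D xs = (xs \<noteq> [] \<and> set xs \<subseteq> SET D \<and> sorted_wrt (set_less D) xs)"

end

theory Submission
  imports Defs "HOL-Combinatorics.Transposition"
begin

text \<open>
  Call a pair of cells (x, y) an inversion of a filling T if x lies in a strictly higher row than y
  but T x < T y. A nontrivial operator pi_i exchanges i and i + 1 when i + 1 sits in a lower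
  row; since the two values are adjacent, this removes exactly that inversion and keeps all others.
  So a chain starting at T has length at most the number of inversions of T. Conversely, a filling
  with an inversion always has one between adjacent values, so a chain of exactly that length
  starts at T, and the rank of the poset is the maximal number of inversions.

  In the lobster, a middle cell is inverted at most with the top cells 1, ..., k, where k is the
  largest top cell with a smaller entry, and then only with bottom cells beyond column k: at most max c1 c2
  outer cells in total. A top cell k can only be inverted with bottom cells l > k. Both bounds are
  attained at once by a suitable reading order of the cells.
\<close>

definition inversions :: "(nat \<times> nat) set \<Rightarrow> ((nat \<times> nat) \<Rightarrow> nat) \<Rightarrow> ((nat \<times> nat) \<times> (nat \<times> nat)) set" where
  "inversions D T = {(x, y). x \<in> D \<and> y \<in> D \<and> fst y < fst x \<and> T x < T y}"

lemma finite_inversions: "finite D \<Longrightarrow> finite (inversions D T)"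
  by (rule finite_subset[of _ "D \<times> D"]) (auto simp: inversions_def)

lemma SET_range:
  assumes "T \<in> SET D" "x \<in> D"
  shows "T x \<in> {1..card D}"
  using assms unfolding SET_def bij_betw_def by auto

lemma SET_eq_iff:
  assumes "T \<in> SET D" "x \<in> D" "y \<in> D"
  shows "T x = T y \<longleftrightarrow> x = y"
  using assms unfolding SET_def bij_betw_def inj_on_def by auto

lemma swap_entries_eq_transpose: "swap_entries i T = transpose i (Suc i) \<circ> T"
  by (auto simp: fun_eq_iff swap_entries_def transpose_def)

lemma transpose_Suc_less_iff:
  fixes a c i :: nat
  assumes "{a, c} \<noteq> {i, Suc i}"
  shows "transpose i (Suc i) a < transpose i (Suc i) c \<longleftrightarrow> a < c"
  using assms by (auto simp: transpose_def)

lemma swap_entries_less_iff: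
  assumes T: "T \<in> SET D" and x: "x \<in> D" "T x = i" and y: "y \<in> D" "T y = i + 1"
    and "u \<in> D" "v \<in> D" "{u, v} \<noteq> {x, y}"
  shows "swap_entries i T u < swap_entries i T v \<longleftrightarrow> T u < T v"
proof -
  have at_i: "T w = i \<longleftrightarrow> w = x" and at_Suc_i: "T w = Suc i \<longleftrightarrow> w = y" if "w \<in> D" for w
    using SET_eq_iff[OF T that x(1)] SET_eq_iff[OF T that y(1)] x y by auto
  have "{T u, T v} \<noteq> {i, Suc i}"
    using at_i[OF \<open>u \<in> D\<close>] at_i[OF \<open>v \<in> D\<close>] at_Suc_i[OF \<open>u \<in> D\<close>] at_Suc_i[OF \<open>v \<in> D\<close>]
      \<open>{u, v} \<noteq> {x, y}\<close> unfolding doubleton_eq_iff by metis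
  then show ?thesis by (simp add: swap_entries_eq_transpose transpose_Suc_less_iff)
qed

lemma SET_swap_entries:
  assumes T: "T \<in> SET D" and x: "x \<in> D" "T x = i" and y: "y \<in> D" "T y = i + 1"
    and below: "fst y < fst x"
  shows "swap_entries i T \<in> SET D"
proof -
  let ?T' = "swap_entries i T"
  have bij: "bij_betw T D {1..card D}" and zero: "\<And>z. z \<notin> D \<Longrightarrow> T z = 0"
    and rows: "\<And>r j j'. (r, j) \<in> D \<Longrightarrow> (r, j') \<in> D \<Longrightarrow> j < j' \<Longrightarrow> T (r, j) < T (r, j')"
    and cols: "\<And>r r' j. (r, j) \<in> D \<Longrightarrow> (r', j) \<in> D \<Longrightarrow> r < r' \<Longrightarrow> T (r, j) < T (r', j)"
    using T unfolding SET_def by auto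
  have i: "i \<in> {1..card D}" "Suc i \<in> {1..card D}"
    using SET_range[OF T x(1)] SET_range[OF T y(1)] x y by auto
  have "bij_betw ?T' D {1..card D}"
    unfolding swap_entries_eq_transpose using i by (intro bij_betw_trans[OF bij]) simp
  moreover have "?T' z = 0" if "z \<notin> D" for z
    using zero[OF that] i by (simp add: swap_entries_def)
  moreover have "?T' (r, j) < ?T' (r, j')" if "(r, j) \<in> D" "(r, j') \<in> D" "j < j'" for r j j'
  proof -
    have "{(r, j), (r, j')} \<noteq> {x, y}"
      using below by (auto simp: doubleton_eq_iff)
    then show ?thesis
      using swap_entries_less_iff[OF T x y that(1,2)] rows[OF that] by simp
  qed
  moreover have "?T' (r, j) < ?T' (r', j)" if "(r, j) \<in> D" "(r', j) \<in> D" "r < r'" for r r' j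
  proof (cases "(r, j) = y \<and> (r', j) = x")
    case True
    then show ?thesis using x y by (simp add: swap_entries_def)
  next
    case False
    then have "{(r, j), (r', j)} \<noteq> {x, y}"
      using below \<open>r < r'\<close> by (auto simp: doubleton_eq_iff)
    then show ?thesis
      using swap_entries_less_iff[OF T x y that(1,2)] cols[OF that] by simp
  qed
  ultimately show ?thesis unfolding SET_def by blast
qed

lemma inversions_swap_entries:
  assumes T: "T \<in> SET D" and x: "x \<in> D" "T x = i" and y: "y \<in> D" "T y = i + 1"
    and below: "fst y < fst x"
  shows "inversions D (swap_entries i T) = inversions D T - {(x, y)}"
proof -
  have "(u, v) \<in> inversions D (swap_entries i T) \<longleftrightarrow> (u, v) \<in> inversions D T - {(x, y)}" for u v
  proof (cases "{u, v} = {x, y}")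
    case True
    then have "u = x \<and> v = y \<or> u = y \<and> v = x" by (auto simp: doubleton_eq_iff)
    then show ?thesis using x y below by (auto simp: inversions_def swap_entries_def)
  next
    case False
    then show ?thesis using swap_entries_less_iff[OF T x y, of u v] by (auto simp: inversions_def)
  qed
  then show ?thesis by auto
qed

lemma pi_step_inversions:
  assumes "pi_step D T T'"
  shows "T' \<in> SET D \<and> (T' = T \<or> inversions D T' \<subset> inversions D T)"
proof -
  have T: "T \<in> SET D" using assms unfolding pi_step_def by blast
  from assms obtain i where "higher D T i \<and> T' = T \<or> lower D T i \<and> T' = swap_entries i T"
    unfolding pi_step_def by blast
  then show ?thesis
  proof
    assume "lower D T i \<and> T' = swap_entries i T"
    then obtain x y where T': "T' = swap_entries i T"
      and xy: "x \<in> D" "y \<in> D" "T x = i" "T y = i + 1" "fst y < fst x"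
      unfolding lower_def by blast
    have "(x, y) \<in> inversions D T" using xy by (auto simp: inversions_def)
    then show ?thesis
      using SET_swap_entries[OF T xy(1,3) xy(2,4,5)] inversions_swap_entries[OF T xy(1,3) xy(2,4,5)] T'
      by blast
  qed (use T in blast)
qed

lemma pi_steps_inversions:
  assumes "(pi_step D)\<^sup>*\<^sup>* T T'" and "T \<in> SET D"
  shows "T' \<in> SET D \<and> (T' = T \<or> inversions D T' \<subset> inversions D T)"
  using assms(1)
proof (induction rule: rtranclp_induct)
  case (step T' T'')
  then show ?case using pi_step_inversions[OF step(2)] by blast
qed (use assms(2) in simp)

lemma set_less_card_inversions:
  assumes "finite D" and "set_less D T T'"
  shows "card (inversions D T') < card (inversions D T)"
  using assms pi_steps_inversions[of D T T'] finite_inversions psubset_card_mono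
  unfolding set_less_def set_le_def by blast

lemma set_less_trans:
  assumes "finite D" and "set_less D T T'" and "set_less D T' T''"
  shows "set_less D T T''"
proof -
  have "card (inversions D T'') < card (inversions D T)"
    using set_less_card_inversions[OF assms(1)] assms(2,3) less_trans by blast
  then show ?thesis using assms(2,3) unfolding set_less_def set_le_def by auto
qed

lemma is_chain_Cons_iff:
  "is_chain D (T # xs) \<longleftrightarrow> T \<in> SET D \<and> (\<forall>T' \<in> set xs. set_less D T T') \<and> (xs = [] \<or> is_chain D xs)"
  by (auto simp: is_chain_def)

lemma is_chain_Cons:
  assumes "finite D" and "is_chain D xs" and "set_less D T (hd xs)"
  shows "is_chain D (T # xs)"
proof -
  obtain T1 ys where xs: "xs = T1 # ys" using assms(2) by (cases xs) (auto simp: is_chain_def)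
  have "\<forall>T' \<in> set xs. set_less D T T'"
    using assms set_less_trans[OF assms(1) assms(3)] unfolding xs is_chain_Cons_iff by auto
  then show ?thesis
    using assms(2,3) unfolding is_chain_Cons_iff set_less_def set_le_def by auto
qed

lemma chain_length_le_card_inversions:
  assumes "finite D" and "is_chain D xs"
  shows "length xs - 1 \<le> card (inversions D (hd xs))"
  using assms(2)
proof (induction xs)
  case (Cons T xs)
  show ?case
  proof (cases xs)
    case (Cons T' ys)
    then have "is_chain D xs" and "set_less D T (hd xs)"
      using Cons.prems unfolding is_chain_Cons_iff by auto
    then show ?thesis
      using Cons.IH set_less_card_inversions[OF assms(1)] \<open>xs = T' # ys\<close> by fastforce
  qed simp
qed simp

lemma inversion_imp_lower:
  assumes T: "T \<in> SET D" and "(x, y) \<in> inversions D T"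
  shows "\<exists>i. lower D T i"
  using assms(2)
proof (induction "T y - T x" arbitrary: x)
  \<comment> \<open>either T x + 1 lies in a lower row than x, or its cell forms an inversion with y of smaller gap\<close>
  case (Suc n)
  then have x: "x \<in> D" and y: "y \<in> D" and "fst y < fst x" "T x < T y"
    by (auto simp: inversions_def)
  have "T x + 1 \<in> T ` D"
    using SET_range[OF T x] SET_range[OF T y] \<open>T x < T y\<close> T
    unfolding SET_def bij_betw_def by auto
  then obtain x' where x': "x' \<in> D" "T x' = T x + 1" by auto
  show ?case
  proof (cases "fst x' < fst x")
    case True
    then show ?thesis using x x' unfolding lower_def by blast
  next
    case False
    have "x' \<noteq> y" using False \<open>fst y < fst x\<close> by auto
    then have "T x' < T y"
      using SET_eq_iff[OF T x'(1) y] x' \<open>T x < T y\<close> by auto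
    then have "(x', y) \<in> inversions D T"
      using False x'(1) y \<open>fst y < fst x\<close> by (auto simp: inversions_def)
    then show ?thesis using Suc.hyps(1)[of x'] Suc.hyps(2) x'(2) by auto
  qed
qed (auto simp: inversions_def)

lemma lower_imp_pi_step:
  assumes T: "T \<in> SET D" and "lower D T i"
  shows "pi_step D T (swap_entries i T)"
proof -
  obtain x y where "x \<in> D" "y \<in> D" "T x = i" "T y = i + 1"
    using assms(2) unfolding lower_def by blast
  then have "1 \<le> i \<and> i + 1 \<le> card D"
    using SET_range[OF T] by fastforce
  then show ?thesis using assms unfolding pi_step_def by blast
qed

lemma exists_chain_card_inversions:
  assumes "finite D" and "T \<in> SET D"
  shows "\<exists>xs. is_chain D xs \<and> hd xs = T \<and> length xs = card (inversions D T) + 1"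
  using assms(2)
proof (induction "card (inversions D T)" arbitrary: T)
  case 0
  then show ?case by (intro exI[of _ "[T]"]) (simp add: is_chain_def)
next
  case (Suc n)
  then obtain x y where "(x, y) \<in> inversions D T"
    using card_0_eq[OF finite_inversions[OF assms(1)]] by force
  then obtain i where "lower D T i"
    using inversion_imp_lower[OF Suc.prems] by blast
  then obtain u v where uv: "u \<in> D" "T u = i" "v \<in> D" "T v = i + 1" "fst v < fst u"
    unfolding lower_def by blast
  define T' where "T' = swap_entries i T"
  have step: "pi_step D T T'"
    unfolding T'_def by (rule lower_imp_pi_step[OF Suc.prems \<open>lower D T i\<close>])
  have T': "T' \<in> SET D"
    unfolding T'_def by (rule SET_swap_entries[OF Suc.prems uv])
  have "inversions D T' = inversions D T - {(u, v)}" and "(u, v) \<in> inversions D T"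
    unfolding T'_def using inversions_swap_entries[OF Suc.prems uv] uv
    by (auto simp: inversions_def)
  then have card_T': "card (inversions D T') = n"
    using Suc.hyps(2) finite_inversions[OF assms(1)] by simp
  then have "T' \<noteq> T" using Suc.hyps(2) by auto
  then have less: "set_less D T T'"
    using step Suc.prems T' unfolding set_less_def set_le_def by blast
  obtain xs where xs: "is_chain D xs" "hd xs = T'" "length xs = n + 1"
    using Suc.hyps(1)[OF card_T'[symmetric] T'] card_T' by blast
  show ?case
    using is_chain_Cons[OF assms(1) xs(1)] less xs Suc.hyps(2) by (intro exI[of _ "T # xs"]) simp
qed

lemma rank_eq_max_card_inversions:
  assumes "finite D" and "T\<^sub>0 \<in> SET D"
    and max: "\<And>T. T \<in> SET D \<Longrightarrow> card (inversions D T) \<le> card (inversions D T\<^sub>0)"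
  shows "(\<exists>xs. is_chain D xs \<and> length xs - 1 = card (inversions D T\<^sub>0)) \<and>
         (\<forall>xs. is_chain D xs \<longrightarrow> length xs - 1 \<le> card (inversions D T\<^sub>0))"
proof (intro conjI allI impI)
  show "\<exists>xs. is_chain D xs \<and> length xs - 1 = card (inversions D T\<^sub>0)"
    using exists_chain_card_inversions[OF assms(1,2)] by fastforce
next
  fix xs assume "is_chain D xs"
  then have "hd xs \<in> SET D" by (cases xs) (auto simp: is_chain_def)
  then show "length xs - 1 \<le> card (inversions D T\<^sub>0)"
    using chain_length_le_card_inversions[OF assms(1) \<open>is_chain D xs\<close>] max le_trans by blast
qed

definition rank_filling :: "(nat \<times> nat) set \<Rightarrow> (nat \<times> nat \<Rightarrow> 'a::linorder) \<Rightarrow> nat \<times> nat \<Rightarrow> nat" where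
  "rank_filling D key x = (if x \<in> D then card {y \<in> D. key y < key x} + 1 else 0)"

lemma rank_filling_less_iff:
  assumes "finite D" and "inj_on key D" and "x \<in> D" and "y \<in> D"
  shows "rank_filling D key x < rank_filling D key y \<longleftrightarrow> key x < key y"
proof -
  have mono: "rank_filling D key u < rank_filling D key v"
    if "u \<in> D" "v \<in> D" "key u < key v" for u v
  proof -
    have "{z \<in> D. key z < key u} \<subset> {z \<in> D. key z < key v}"
      using that by auto
    then show ?thesis
      using that assms(1) by (simp add: rank_filling_def psubset_card_mono)
  qed
  show ?thesis
  proof
    assume "rank_filling D key x < rank_filling D key y"
    moreover have "key x \<noteq> key y" using calculation assms(2-4) inj_onD by fastforce
    ultimately show "key x < key y" using mono[OF assms(4,3)] by fastforce
  qed (rule mono[OF assms(3,4)])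
qed

lemma SET_rank_filling:
  assumes fin: "finite D" and inj: "inj_on key D"
    and rows: "\<And>r j j'. (r, j) \<in> D \<Longrightarrow> (r, j') \<in> D \<Longrightarrow> j < j' \<Longrightarrow> key (r, j) < key (r, j')"
    and cols: "\<And>r r' j. (r, j) \<in> D \<Longrightarrow> (r', j) \<in> D \<Longrightarrow> r < r' \<Longrightarrow> key (r, j) < key (r', j)"
  shows "rank_filling D key \<in> SET D"
proof -
  let ?T = "rank_filling D key"
  have "inj_on ?T D"
    using rank_filling_less_iff[OF fin inj] inj by (intro inj_onI) (metis inj_onD less_irrefl neqE)
  moreover have "?T ` D \<subseteq> {1..card D}"
  proof
    fix t assume "t \<in> ?T ` D"
    then obtain x where "x \<in> D" "t = ?T x" by blast
    moreover have "card {y \<in> D. key y < key x} < card D"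
      using \<open>x \<in> D\<close> fin by (intro psubset_card_mono) auto
    ultimately show "t \<in> {1..card D}" by (simp add: rank_filling_def)
  qed
  ultimately have "bij_betw ?T D {1..card D}"
    unfolding bij_betw_def by (simp add: card_image card_subset_eq)
  then show ?thesis
    using rank_filling_less_iff[OF fin inj] rows cols unfolding SET_def by (simp add: rank_filling_def)
qed

lemma inversions_rank_filling:
  assumes "finite D" and "inj_on key D"
  shows "inversions D (rank_filling D key) = {(x, y). x \<in> D \<and> y \<in> D \<and> fst y < fst x \<and> key x < key y}"
  using rank_filling_less_iff[OF assms] unfolding inversions_def by blast

lemma mem_lobster_cells:
  "(r, j) \<in> lobster_cells b c1 c2 \<longleftrightarrow>
     r = 1 \<and> b + 2 \<le> j \<and> j \<le> b + 1 + c2 \<or> r = 2 \<and> 2 \<le> j \<and> j \<le> b + 1 \<or> r = 3 \<and> b + 2 \<le> j \<and> j \<le> b + 1 + c1"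
  by (auto simp: lobster_cells_def)

lemma finite_lobster_cells: "finite (lobster_cells b c1 c2)"
  by (rule finite_subset[of _ "{1..3} \<times> {2..b + 1 + c1 + c2}"]) (auto simp: mem_lobster_cells)

lemma lobster_cells_cases:
  assumes "x \<in> lobster_cells b c1 c2"
  obtains (bot) l where "1 \<le> l" "l \<le> c2" "x = (1, b + 1 + l)"
    | (mid) j where "2 \<le> j" "j \<le> b + 1" "x = (2, j)"
    | (top) k where "1 \<le> k" "k \<le> c1" "x = (3, b + 1 + k)"
proof -
  obtain r j where x: "x = (r, j)" by fastforce
  show ?thesis
    using assms that(1,3)[of "j - (b + 1)"] that(2)[of j] unfolding x mem_lobster_cells by auto
qed

definition lobster_rank :: "nat \<Rightarrow> nat \<Rightarrow> nat \<Rightarrow> nat" where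
  "lobster_rank b c1 c2 = b * max c1 c2 + (\<Sum>k = 1..min c1 c2. c2 - k)"

lemma sum_diff_plus_choose:
  fixes c :: nat
  assumes "p \<le> c"
  shows "(\<Sum>k = 1..p. c - k) + (p + 1 choose 2) = p * c"
  using assms by (induction p) (auto simp: numeral_2_eq_2)

lemma lobster_rank_eq:
  "lobster_rank b c1 c2 = (if c1 \<le> c2 then c2 * (b + c1) - (c1 + 1 choose 2) else b * c1 + (c2 choose 2))"
proof (cases "c1 \<le> c2")
  case True
  then show ?thesis
    using sum_diff_plus_choose[OF True] by (auto simp: lobster_rank_def algebra_simps)
next
  case False
  have "(c2 + 1 choose 2) = (c2 choose 2) + c2" by (simp add: numeral_2_eq_2)
  moreover have "2 * (c2 choose 2) + c2 = c2 * c2" by (induction c2) (auto simp: numeral_2_eq_2 algebra_simps)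
  ultimately show ?thesis
    using sum_diff_plus_choose[of c2 c2] False by (auto simp: lobster_rank_def)
qed

lemma lobster_bot_less_top:
  assumes T: "T \<in> SET (lobster_cells b c1 c2)" and "1 \<le> l" "l \<le> k" "k \<le> c1" "l \<le> c2"
  shows "T (1, b + 1 + l) < T (3, b + 1 + k)"
proof -
  have cols: "T (1, b + 1 + l) < T (3, b + 1 + l)"
    and rows: "l < k \<Longrightarrow> T (3, b + 1 + l) < T (3, b + 1 + k)"
    using T assms(2-5) unfolding SET_def by (auto simp: mem_lobster_cells)
  show ?thesis using cols rows \<open>l \<le> k\<close> by (cases "l = k") auto
qed

lemma lobster_mid_inversions_le:
  assumes T: "T \<in> SET (lobster_cells b c1 c2)"
  shows "card {l \<in> {1..c2}. T (2, j) < T (1, b + 1 + l)} + card {k \<in> {1..c1}. T (3, b + 1 + k) < T (2, j)}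
    \<le> max c1 c2"
    (is "card ?below + card ?above \<le> _")
proof (cases "?above = {}")
  case True
  have "card ?below \<le> card {1..c2}" by (rule card_mono) auto
  then have "card ?below \<le> c2" by simp
  moreover have "card ?above = 0" by (simp only: True card.empty)
  ultimately show ?thesis using max.cobounded2[of c2 c1] by linarith
next
  case False
  define p where "p = Max ?above"
  have "p \<in> ?above" using Max_in[OF _ False] unfolding p_def by auto
  then have p: "1 \<le> p" "p \<le> c1" "T (3, b + 1 + p) < T (2, j)" by auto
  have "?above \<subseteq> {1..p}" using Max_ge[of ?above] unfolding p_def by auto
  then have "card ?above \<le> p" using card_mono[of "{1..p}" ?above] by simp
  have "?below \<subseteq> {p + 1..c2}"
  proof
    fix l assume l: "l \<in> ?below"
    have "\<not> l \<le> p"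
      using lobster_bot_less_top[OF T, of l p] l p by auto
    then show "l \<in> {p + 1..c2}" using l by auto
  qed
  then have "card ?below \<le> c2 - p" using card_mono[of "{p + 1..c2}" ?below] by simp
  moreover have "c2 - p + p \<le> max c1 c2" using p(2) by auto
  ultimately show ?thesis using \<open>card ?above \<le> p\<close> by linarith
qed

lemma lobster_top_bot_inversions_subset:
  assumes T: "T \<in> SET (lobster_cells b c1 c2)"
  shows "{(k, l) \<in> {1..c1} \<times> {1..c2}. T (3, b + 1 + k) < T (1, b + 1 + l)}
    \<subseteq> (SIGMA k:{1..min c1 c2}. {k + 1..c2})"
proof (rule subsetI)
  fix p assume "p \<in> {(k, l) \<in> {1..c1} \<times> {1..c2}. T (3, b + 1 + k) < T (1, b + 1 + l)}"
  then obtain k l where p: "p = (k, l)" "k \<in> {1..c1}" "l \<in> {1..c2}" "T (3, b + 1 + k) < T (1, b + 1 + l)"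
    by blast
  then have "\<not> l \<le> k" using lobster_bot_less_top[OF T, of l k] by auto
  then show "p \<in> (SIGMA k:{1..min c1 c2}. {k + 1..c2})" using p by auto
qed

lemma card_inversions_le_lobster_rank:
  fixes b c1 c2 :: nat
  defines "D \<equiv> lobster_cells b c1 c2"
  assumes T: "T \<in> SET D"
  shows "card (inversions D T) \<le> lobster_rank b c1 c2"
proof -
  define below where "below j = {l \<in> {1..c2}. T (2, j) < T (1, b + 1 + l)}" for j
  define above where "above j = {k \<in> {1..c1}. T (3, b + 1 + k) < T (2, j)}" for j
  define mid where "mid j = (\<lambda>l. ((2::nat, j), (1::nat, b + 1 + l))) ` below j
    \<union> (\<lambda>k. ((3::nat, b + 1 + k), (2::nat, j))) ` above j" for j
  define top_below where "top_below = {(k, l) \<in> {1..c1} \<times> {1..c2}. T (3, b + 1 + k) < T (1, b + 1 + l)}"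
  define top_bot where "top_bot = (\<lambda>(k, l). ((3::nat, b + 1 + k), (1::nat, b + 1 + l))) ` top_below"
  have top_below: "top_below \<subseteq> (SIGMA k:{1..min c1 c2}. {k + 1..c2})" "finite top_below"
    unfolding top_below_def using lobster_top_bot_inversions_subset[OF T[unfolded D_def]]
    by (auto intro: finite_subset)
  have cover: "inversions D T \<subseteq> (\<Union>j \<in> {2..b + 1}. mid j) \<union> top_bot"
  proof (rule subsetI)
    fix p assume "p \<in> inversions D T"
    then obtain x y where p: "p = (x, y)" and xy: "x \<in> D" "y \<in> D" "fst y < fst x" "T x < T y"
      unfolding inversions_def by blast
    from xy(1,2) show "p \<in> (\<Union>j \<in> {2..b + 1}. mid j) \<union> top_bot"
      unfolding D_def
      by (elim lobster_cells_cases)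
        (use p xy(3,4) in \<open>auto simp: mid_def below_def above_def top_bot_def top_below_def\<close>)
  qed
  have card_mid: "card (mid j) \<le> max c1 c2" for j
  proof -
    have "card (mid j) \<le> card (below j) + card (above j)"
      unfolding mid_def by (intro card_Un_le[THEN le_trans] add_mono card_image_le) (auto simp: below_def above_def)
    then show ?thesis using lobster_mid_inversions_le[OF T[unfolded D_def]] unfolding below_def above_def
      by (meson le_trans)
  qed
  have card_top_bot: "card top_bot \<le> (\<Sum>k = 1..min c1 c2. c2 - k)"
  proof -
    have "card top_bot \<le> card top_below"
      unfolding top_bot_def using top_below(2) by (rule card_image_le)
    also have "\<dots> \<le> card (SIGMA k:{1..min c1 c2}. {k + 1..c2})"
      by (rule card_mono[OF _ top_below(1)]) auto
    finally show ?thesis by (simp add: card_SigmaI)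
  qed
  have "finite (mid j)" for j
    unfolding mid_def below_def above_def by auto
  then have "card (inversions D T) \<le> card ((\<Union>j \<in> {2..b + 1}. mid j) \<union> top_bot)"
    using top_below(2) by (intro card_mono[OF _ cover]) (auto simp: top_bot_def)
  also have "\<dots> \<le> (\<Sum>j = 2..b + 1. card (mid j)) + card top_bot"
    by (intro card_Un_le[THEN le_trans] add_mono card_UN_le) auto
  also have "\<dots> \<le> b * max c1 c2 + (\<Sum>k = 1..min c1 c2. c2 - k)"
    using sum_bounded_above[of "{2..b + 1}" "\<lambda>j. card (mid j)" "max c1 c2"] card_mid card_top_bot
    by (intro add_mono) auto
  finally show ?thesis unfolding lobster_rank_def .
qed

text \<open>
  The middle row is read first if c1 \<le> c2 and last otherwise; the outer rows are read
  column by column, bottom before top, so that each top cell precedes every bottom cell to its right.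
\<close>

definition lobster_key :: "nat \<Rightarrow> nat \<Rightarrow> nat \<Rightarrow> nat \<times> nat \<Rightarrow> nat" where
  "lobster_key b c1 c2 = (\<lambda>(r, j).
     if r = 2 then (if c1 \<le> c2 then j else 2 * (b + c1 + c2) + 4 + j)
     else 2 * j + (if r = 3 then 1 else 0))"

lemma inj_on_lobster_key: "inj_on (lobster_key b c1 c2) (lobster_cells b c1 c2)"
proof (rule inj_onI)
  fix x y
  assume "x \<in> lobster_cells b c1 c2" "y \<in> lobster_cells b c1 c2" "lobster_key b c1 c2 x = lobster_key b c1 c2 y"
  then show "x = y"
    by (elim lobster_cells_cases) (auto simp: lobster_key_def Suc_double_not_eq_double double_not_eq_Suc_double split: if_splits)
qed

lemma SET_lobster_rank_filling:
  "rank_filling (lobster_cells b c1 c2) (lobster_key b c1 c2) \<in> SET (lobster_cells b c1 c2)"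
proof (rule SET_rank_filling[OF finite_lobster_cells inj_on_lobster_key])
  show "lobster_key b c1 c2 (r, j) < lobster_key b c1 c2 (r, j')"
    if "(r, j) \<in> lobster_cells b c1 c2" "(r, j') \<in> lobster_cells b c1 c2" "j < j'" for r j j'
    using that(1,2) by (elim lobster_cells_cases) (use that(3) in \<open>auto simp: lobster_key_def\<close>)
  show "lobster_key b c1 c2 (r, j) < lobster_key b c1 c2 (r', j)"
    if "(r, j) \<in> lobster_cells b c1 c2" "(r', j) \<in> lobster_cells b c1 c2" "r < r'" for r r' j
    using that(1,2) by (elim lobster_cells_cases) (use that(3) in \<open>auto simp: lobster_key_def\<close>)
qed

lemma lobster_rank_le_card_inversions_rank_filling:
  fixes b c1 c2 :: nat
  defines "D \<equiv> lobster_cells b c1 c2"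
  shows "lobster_rank b c1 c2 \<le> card (inversions D (rank_filling D (lobster_key b c1 c2)))"
proof -
  let ?K = "lobster_key b c1 c2"
  define I where "I = inversions D (rank_filling D ?K)"
  have I_eq: "I = {(x, y). x \<in> D \<and> y \<in> D \<and> fst y < fst x \<and> ?K x < ?K y}"
    unfolding I_def D_def by (rule inversions_rank_filling[OF finite_lobster_cells inj_on_lobster_key])
  define top_bot where
    "top_bot = (\<lambda>(k, l). ((3::nat, b + 1 + k), (1::nat, b + 1 + l))) ` (SIGMA k:{1..min c1 c2}. {k + 1..c2})"
  have "top_bot \<subseteq> I"
    unfolding top_bot_def I_eq D_def by (auto simp: mem_lobster_cells lobster_key_def)
  have card_top_bot: "card top_bot = (\<Sum>k = 1..min c1 c2. c2 - k)"
    unfolding top_bot_def by (subst card_image) (auto simp: inj_on_def card_SigmaI)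
  obtain mid where "mid \<subseteq> I" "card mid = b * max c1 c2" "finite mid" "mid \<inter> top_bot = {}"
  proof (cases "c1 \<le> c2")
    case True
    let ?mid = "(\<lambda>(j, l). ((2::nat, j), (1::nat, b + 1 + l))) ` ({2..b + 1} \<times> {1..c2})"
    show ?thesis
    proof (rule that[of ?mid])
      show "?mid \<subseteq> I" using True unfolding I_eq D_def by (auto simp: mem_lobster_cells lobster_key_def)
      show "card ?mid = b * max c1 c2" using True by (subst card_image) (auto simp: inj_on_def)
    qed (auto simp: top_bot_def)
  next
    case False
    let ?mid = "(\<lambda>(k, j). ((3::nat, b + 1 + k), (2::nat, j))) ` ({1..c1} \<times> {2..b + 1})"
    show ?thesis
    proof (rule that[of ?mid])
      show "?mid \<subseteq> I" using False unfolding I_eq D_def by (auto simp: mem_lobster_cells lobster_key_def)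
      show "card ?mid = b * max c1 c2" using False by (subst card_image) (auto simp: inj_on_def)
    qed (auto simp: top_bot_def)
  qed
  have "finite I" unfolding I_def D_def by (rule finite_inversions[OF finite_lobster_cells])
  have "lobster_rank b c1 c2 = card (mid \<union> top_bot)"
    using \<open>finite mid\<close> \<open>mid \<inter> top_bot = {}\<close> \<open>card mid = _\<close> card_top_bot
    by (simp add: lobster_rank_def card_Un_disjoint top_bot_def)
  also have "\<dots> \<le> card I"
    using \<open>mid \<subseteq> I\<close> \<open>top_bot \<subseteq> I\<close> \<open>finite I\<close> by (intro card_mono) auto
  finally show ?thesis unfolding I_def .
qed

theorem corollary5p10:
  fixes b c1 c2 :: nat
  assumes "0 < b" and "0 < c1" and "0 < c2"
  defines "D \<equiv> lobster_cells b c1 c2"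
  defines "r \<equiv> (if c1 \<le> c2 then c2 * (b + c1) - (c1 + 1 choose 2) else b * c1 + (c2 choose 2))"
  shows "(\<exists>xs. is_chain D xs \<and> length xs - 1 = r) \<and>
         (\<forall>xs. is_chain D xs \<longrightarrow> length xs - 1 \<le> r)"
proof -
  let ?T\<^sub>0 = "rank_filling D (lobster_key b c1 c2)"
  have T\<^sub>0: "?T\<^sub>0 \<in> SET D"
    unfolding D_def by (rule SET_lobster_rank_filling)
  have max: "card (inversions D T) \<le> r" if "T \<in> SET D" for T
    using card_inversions_le_lobster_rank that unfolding D_def r_def lobster_rank_eq by blast
  have "r \<le> card (inversions D ?T\<^sub>0)"
    using lobster_rank_le_card_inversions_rank_filling unfolding D_def r_def lobster_rank_eq by blast
  then have "card (inversions D ?T\<^sub>0) = r"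
    using max[OF T\<^sub>0] by simp
  then show ?thesis
    using rank_eq_max_card_inversions[OF _ T\<^sub>0] max finite_lobster_cells unfolding D_def by simp
qed

end
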